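(* Let $n\ge 1$ be an integer and consider the encrypted-cloning encoded state $\rho_{\mathrm{enc}}^{(n)}$ on the qubits $A,S_1,N_1,\dots,S_n,N_n$ (defined in the context). Let $\mathcal R_n=\{S_1,N_1,\dots,S_n,N_n\}$ be the storage register. Any subset $B\subset \mathcal R_n$ that misses a complete pair, i.e. such that $S_j\notin B$ and $N_j\notin B$ for some $j\in\{1,\dots,n\}$, is completely non-informative: the reduced state $\rho_B(\psi)$, obtained from $\rho_{\mathrm{enc}}^{(n)}$ by tracing out $A$ and all qubits of $\mathcal R_n\setminus B$, does not depend on the input state $\ket{\psi}$.
   Context: Pauli operators: $\sigma_0=I,\sigma_1=X,\sigma_2=Y,\sigma_3=Z$. An input qubit $A$ is prepared in an arbitrary pure state $\ket{\psi}_A$. For $i=1,\dots,n$, the signal qubit $S_i$ and noise qubit $N_i$ are prepared in the Bell state $\ket{\phi}_{S_iN_i}=\frac{1}{\sqrt2}(\ket{00}+\ket{11})$. Set $\alpha_0=1$, $\alpha_1=\alpha_3=i$, $\alpha_2=-i^{\,n+1}$, and define the unitary $U_{\mathrm{enc}}^{(n)}=\frac12\sum_{\mu=0}^3\alpha_\mu^{-1}\sigma_\mu^{(A)}\otimes\bigotimes_{i=1}^n\sigma_\mu^{(S_i)}$ (acting as identity on the $N_i$). The encoded state is $\ket{\Psi_{\mathrm{enc}}}=U_{\mathrm{enc}}^{(n)}\big[\ket{\psi}_A\otimes\bigotimes_{i=1}^n\ket{\phi}_{S_iN_i}\big]$ and $\rho_{\mathrm{enc}}^{(n)}=\ket{\Psi_{\mathrm{enc}}}\bra{\Psi_{\mathrm{enc}}}$.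 A subset $B$ of the storage register is called completely non-informative (completely uninformative) if its reduced state $\rho_B(\psi)$ is independent of $\ket{\psi}$. *)

theory Defs
  imports Complex_Main
begin

datatype qlabel = QA | QS nat | QN nat

text \<open>A computational-basis configuration assigns a bit to every qubit label.\<close>
type_synonym config = "qlabel \<Rightarrow> bool"

definition qubits :: "nat \<Rightarrow> qlabel set" where
  "qubits n = insert QA (QS ` {1..n} \<union> QN ` {1..n})"

definition storage :: "nat \<Rightarrow> qlabel set" where
  "storage n = QS ` {1..n} \<union> QN ` {1..n}"

definition configs :: "qlabel set \<Rightarrow> config set" where
  "configs X = {f. \<forall>q. q \<notin> X \<longrightarrow> f q = False}"

text \<open>Matrix entries of the Pauli operators (False = |0>, True = |1>):
  pauli mu a b = <a| sigma_mu |b>.\<close>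
definition pauli :: "nat \<Rightarrow> bool \<Rightarrow> bool \<Rightarrow> complex" where
  "pauli mu a b =
     (if mu = 0 then (if a = b then 1 else 0)
      else if mu = 1 then (if a \<noteq> b then 1 else 0)
      else if mu = 2 then (if a = b then 0 else if a then \<i> else - \<i>)
      else (if a = b then (if a then -1 else 1) else 0))"

definition alpha :: "nat \<Rightarrow> nat \<Rightarrow> complex" where
  "alpha n mu = (if mu = 0 then 1 else if mu = 2 then - (\<i> ^ (n + 1)) else \<i>)"

text \<open>State vectors on the qubits of qubits n: functions on configurations.
  The input state psi : bool => complex gives the amplitudes of |0>, |1>.\<close>
definition pure_qubit :: "(bool \<Rightarrow> complex) \<Rightarrow> bool" where
  "pure_qubit psi \<longleftrightarrow> (cmod (psi False))\<^sup>2 + (cmod (psi True))\<^sup>2 = 1"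

text \<open>Initial state |psi>_A (x) tensor_i |phi>_{S_i N_i}.\<close>
definition init_state :: "nat \<Rightarrow> (bool \<Rightarrow> complex) \<Rightarrow> config \<Rightarrow> complex" where
  "init_state n psi f =
     psi (f QA) * (\<Prod>i\<in>{1..n}. if f (QS i) = f (QN i) then complex_of_real (1 / sqrt 2) else 0)"

text \<open>Matrix element <f| sigma_mu^(A) (x) tensor_i sigma_mu^(S_i) (x) Id_N |g>.\<close>
definition pauli_string :: "nat \<Rightarrow> nat \<Rightarrow> config \<Rightarrow> config \<Rightarrow> complex" where
  "pauli_string n mu f g =
     pauli mu (f QA) (g QA) *
     (\<Prod>i\<in>{1..n}. pauli mu (f (QS i)) (g (QS i)) * (if f (QN i) = g (QN i) then 1 else 0))"

definition U_enc :: "nat \<Rightarrow> config \<Rightarrow> config \<Rightarrow> complex" where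
  "U_enc n f g = (1/2) * (\<Sum>mu<4. inverse (alpha n mu) * pauli_string n mu f g)"

definition enc_state :: "nat \<Rightarrow> (bool \<Rightarrow> complex) \<Rightarrow> config \<Rightarrow> complex" where
  "enc_state n psi f = (\<Sum>g\<in>configs (qubits n). U_enc n f g * init_state n psi g)"

definition glue :: "qlabel set \<Rightarrow> config \<Rightarrow> config \<Rightarrow> config" where
  "glue B x z = (\<lambda>q. if q \<in> B then x q else z q)"

text \<open>Reduced density matrix rho_B(psi) of rho_enc^(n) = |Psi_enc><Psi_enc|,
  obtained by tracing out all qubits not in B (A and storage qubits outside B):
  <x| rho_B |y> = sum_z <x z|Psi_enc> <Psi_enc|y z>.\<close>
definition reduced_state :: "nat \<Rightarrow> qlabel set \<Rightarrow> (bool \<Rightarrow> complex) \<Rightarrow> config \<Rightarrow> config \<Rightarrow> complex" where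
  "reduced_state n B psi x y =
     (\<Sum>z\<in>configs (qubits n - B).
        enc_state n psi (glue B x z) * cnj (enc_state n psi (glue B y z)))"

definition completely_noninformative :: "nat \<Rightarrow> qlabel set \<Rightarrow> bool" where
  "completely_noninformative n B \<longleftrightarrow>
     (\<forall>psi phi. pure_qubit psi \<longrightarrow> pure_qubit phi \<longrightarrow>
        (\<forall>x\<in>configs B. \<forall>y\<in>configs B. reduced_state n B psi x y = reduced_state n B phi x y))"

end

theory Submission
  imports Defs
begin

(* Expanding U_enc gives
     |Psi_enc> = 1/2 sum_mu alpha_mu^-1 sigma_mu|psi>_A (x) tensor_i (sigma_mu (x) 1)|phi>_{S_i N_i}.
   The four Bell states (sigma_mu (x) 1)|phi> are orthonormal and every sigma_mu|psi> is a unit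
   vector. Hence, once A and a complete pair S_j N_j are traced out, all cross terms mu /= nu vanish,
   and rho_B is 1/4 sum_mu of the partial traces of the remaining products of Bell states
   tensor_{i /= j} (sigma_mu (x) 1)|phi>, in which psi no longer occurs. *)

lemma sum_expand_orthogonal:
  fixes e :: "'m \<Rightarrow> 'x \<Rightarrow> complex"
  assumes "finite M" "finite X"
    and "\<And>mu nu. mu \<in> M \<Longrightarrow> nu \<in> M \<Longrightarrow>
           (\<Sum>x\<in>X. e mu x * cnj (e nu x)) = (if mu = nu then c else 0)"
  shows "(\<Sum>x\<in>X. (\<Sum>mu\<in>M. u mu * e mu x) * cnj (\<Sum>nu\<in>M. v nu * e nu x))
       = c * (\<Sum>mu\<in>M. u mu * cnj (v mu))"
proof -
  have "(\<Sum>x\<in>X. (\<Sum>mu\<in>M. u mu * e mu x) * cnj (\<Sum>nu\<in>M. v nu * e nu x))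
      = (\<Sum>x\<in>X. \<Sum>mu\<in>M. \<Sum>nu\<in>M. u mu * cnj (v nu) * (e mu x * cnj (e nu x)))"
    by (simp add: cnj_sum sum_product ac_simps)
  also have "\<dots> = (\<Sum>mu\<in>M. \<Sum>nu\<in>M. u mu * cnj (v nu) * (\<Sum>x\<in>X. e mu x * cnj (e nu x)))"
    by (simp add: sum_distrib_left sum.swap[of _ X])
  also have "\<dots> = (\<Sum>mu\<in>M. u mu * cnj (v mu) * c)"
    using assms by (intro sum.cong refl) (simp add: if_distrib[of "(*) _"] sum.delta cong: if_cong)
  finally show ?thesis by (simp add: sum_distrib_left ac_simps)
qed

definition pauli_flip :: "nat \<Rightarrow> bool \<Rightarrow> bool" where
  "pauli_flip mu b = (if mu = 1 \<or> mu = 2 then \<not> b else b)"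

lemma pauli_eq_0: "c \<noteq> pauli_flip mu a \<Longrightarrow> pauli mu a c = 0"
  by (auto simp: pauli_def pauli_flip_def)

definition pauli_apply :: "nat \<Rightarrow> (bool \<Rightarrow> complex) \<Rightarrow> bool \<Rightarrow> complex" where
  "pauli_apply mu psi a = (\<Sum>c\<in>UNIV. pauli mu a c * psi c)"

lemma pauli_apply_eq: "pauli_apply mu psi a = pauli mu a (pauli_flip mu a) * psi (pauli_flip mu a)"
  unfolding pauli_apply_def UNIV_bool using pauli_eq_0[of _ mu a]
  by (cases "pauli_flip mu a") auto

lemma pauli_orthogonal:
  assumes "mu < 4" "nu < 4"
  shows "(\<Sum>s\<in>UNIV. \<Sum>t\<in>UNIV. pauli mu s t * cnj (pauli nu s t)) = (if mu = nu then 2 else 0)"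
  using assms by (auto simp: UNIV_bool pauli_def less_Suc_eq numeral_eq_Suc)

lemma pure_qubit_iff:
  "pure_qubit psi \<longleftrightarrow> psi False * cnj (psi False) + psi True * cnj (psi True) = 1"
  unfolding pure_qubit_def complex_norm_square[symmetric]
  by (metis of_real_1 of_real_add of_real_eq_iff)

lemma pauli_apply_norm:
  assumes "mu < 4" "pure_qubit psi"
  shows "(\<Sum>a\<in>UNIV. pauli_apply mu psi a * cnj (pauli_apply mu psi a)) = 1"
  using assms
  by (auto simp: pure_qubit_iff UNIV_bool pauli_apply_def pauli_def less_Suc_eq numeral_eq_Suc
      algebra_simps)

lemma norm_alpha: "cmod (alpha n mu) = 1"
  by (simp add: alpha_def norm_mult norm_power)

lemma inverse_alpha_mult_cnj: "inverse (alpha n mu) * cnj (inverse (alpha n mu)) = 1"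
proof -
  have "alpha n mu * cnj (alpha n mu) = 1"
    using complex_norm_square[of "alpha n mu"] by (simp add: norm_alpha)
  then show ?thesis by (metis complex_cnj_inverse inverse_1 inverse_mult_distrib)
qed

lemma finite_configs: "finite X \<Longrightarrow> finite (configs X)"
proof -
  assume "finite X"
  have "configs X \<subseteq> (\<lambda>S q. q \<in> S) ` Pow X"
  proof
    fix f assume "f \<in> configs X"
    then have "{q. f q} \<in> Pow X" "f = (\<lambda>q. q \<in> {q. f q})" by (auto simp: configs_def)
    then show "f \<in> (\<lambda>S q. q \<in> S) ` Pow X" by blast
  qed
  with \<open>finite X\<close> show ?thesis by (meson finite_Pow_iff finite_imageI finite_subset)
qed

lemma finite_qubits: "finite (qubits n)"
  by (simp add: qubits_def)

lemma sum_configs_remove: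
  assumes "q \<in> X"
  shows "(\<Sum>z\<in>configs X. F z) = (\<Sum>z\<in>configs (X - {q}). \<Sum>b\<in>UNIV. F (z(q := b)))"
proof -
  have "bij_betw (\<lambda>(z, b). z(q := b)) (configs (X - {q}) \<times> UNIV) (configs X)"
    by (rule bij_betw_byWitness[where f'="\<lambda>z. (z(q := False), z q)"])
       (use assms in \<open>auto simp: configs_def fun_eq_iff split: if_splits\<close>)
  then have "(\<Sum>z\<in>configs X. F z) = (\<Sum>(z, b)\<in>configs (X - {q}) \<times> UNIV. F (z(q := b)))"
    by (simp add: sum.reindex_bij_betw[symmetric] split_def)
  then show ?thesis by (simp add: sum.cartesian_product)
qed

(* bell_amp I mu f = <f| tensor_{i in I} (sigma_mu (x) 1)|phi>_{S_i N_i} *)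
definition bell_amp :: "nat set \<Rightarrow> nat \<Rightarrow> config \<Rightarrow> complex" where
  "bell_amp I mu f = (\<Prod>i\<in>I. pauli mu (f (QS i)) (f (QN i)) * complex_of_real (1 / sqrt 2))"

definition flip_config :: "nat \<Rightarrow> nat \<Rightarrow> config \<Rightarrow> config" where
  "flip_config n mu f q =
     (q \<in> qubits n \<and> (case q of QN i \<Rightarrow> f q | _ \<Rightarrow> pauli_flip mu (f q)))"

lemma flip_config_in_configs: "flip_config n mu f \<in> configs (qubits n)"
  by (simp add: flip_config_def configs_def)

lemma pauli_string_eq_0:
  assumes g: "g \<in> configs (qubits n)" "g \<noteq> flip_config n mu f"
  shows "pauli_string n mu f g = 0"
proof -
  obtain q where q: "g q \<noteq> flip_config n mu f q" using g(2) by auto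
  then have "q \<in> qubits n" using g(1) by (auto simp: flip_config_def configs_def)
  then consider "q = QA" | i where "i \<in> {1..n}" "q = QS i" | i where "i \<in> {1..n}" "q = QN i"
    by (auto simp: qubits_def)
  then show ?thesis
  proof cases
    case 1
    then show ?thesis using q by (simp add: pauli_string_def pauli_eq_0 flip_config_def qubits_def)
  next
    case (2 i)
    then have "pauli mu (f (QS i)) (g (QS i)) = 0"
      using q by (intro pauli_eq_0) (simp add: flip_config_def qubits_def)
    then show ?thesis using 2 by (auto simp: pauli_string_def intro!: prod_zero bexI[of _ i])
  next
    case (3 i)
    then have "f (QN i) \<noteq> g (QN i)" using q by (simp add: flip_config_def qubits_def)
    then show ?thesis using 3 by (auto simp: pauli_string_def intro!: prod_zero bexI[of _ i])
  qed
qed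

lemma pauli_string_init_state_flip_config:
  "pauli_string n mu f (flip_config n mu f) * init_state n psi (flip_config n mu f)
     = pauli_apply mu psi (f QA) * bell_amp {1..n} mu f"
proof -
  let ?g = "flip_config n mu f" and ?r = "complex_of_real (1 / sqrt 2)"
  have g: "?g QA = pauli_flip mu (f QA)"
    "\<And>i. i \<in> {1..n} \<Longrightarrow> ?g (QS i) = pauli_flip mu (f (QS i)) \<and> ?g (QN i) = f (QN i)"
    by (simp_all add: flip_config_def qubits_def)
  have pair: "pauli mu s (pauli_flip mu s) * (if pauli_flip mu s = t then ?r else 0) = pauli mu s t * ?r"
    for s t
    using pauli_eq_0[of t mu s] by auto
  have "pauli_string n mu f ?g * init_state n psi ?g
      = pauli mu (f QA) (pauli_flip mu (f QA)) * psi (pauli_flip mu (f QA)) *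
        (\<Prod>i\<in>{1..n}. pauli mu (f (QS i)) (pauli_flip mu (f (QS i))) *
           (if pauli_flip mu (f (QS i)) = f (QN i) then ?r else 0))"
  proof -
    have "(\<Prod>i\<in>{1..n}. pauli mu (f (QS i)) (?g (QS i)) * (if f (QN i) = ?g (QN i) then 1 else 0))
        = (\<Prod>i\<in>{1..n}. pauli mu (f (QS i)) (pauli_flip mu (f (QS i))))"
      "(\<Prod>i\<in>{1..n}. if ?g (QS i) = ?g (QN i) then ?r else 0)
        = (\<Prod>i\<in>{1..n}. if pauli_flip mu (f (QS i)) = f (QN i) then ?r else 0)"
      by (intro prod.cong refl; simp add: g)+
    then show ?thesis
      unfolding pauli_string_def init_state_def g(1) prod.distrib by (simp add: ac_simps)
  qed
  also have "\<dots> = pauli_apply mu psi (f QA) * bell_amp {1..n} mu f"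
    by (simp only: pair pauli_apply_eq bell_amp_def)
  finally show ?thesis .
qed

lemma enc_state_eq:
  "enc_state n psi f
     = 1/2 * (\<Sum>mu<4. inverse (alpha n mu) * pauli_apply mu psi (f QA) * bell_amp {1..n} mu f)"
proof -
  have single: "(\<Sum>g\<in>configs (qubits n). pauli_string n mu f g * init_state n psi g)
      = pauli_apply mu psi (f QA) * bell_amp {1..n} mu f" for mu
    by (subst sum.remove[OF finite_configs[OF finite_qubits] flip_config_in_configs[of n mu f]])
       (simp add: pauli_string_eq_0 pauli_string_init_state_flip_config)
  have "enc_state n psi f
      = 1/2 * (\<Sum>mu<4. inverse (alpha n mu) *
          (\<Sum>g\<in>configs (qubits n). pauli_string n mu f g * init_state n psi g))"
    unfolding enc_state_def U_enc_def
    by (simp add: sum_distrib_left sum_distrib_right sum.swap[of _ "configs (qubits n)"] ac_simps)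
  then show ?thesis by (simp add: single mult.assoc)
qed

lemma bell_amp_remove:
  assumes "finite I" "j \<in> I"
  shows "bell_amp I mu f
       = pauli mu (f (QS j)) (f (QN j)) * complex_of_real (1 / sqrt 2) * bell_amp (I - {j}) mu f"
  unfolding bell_amp_def using assms by (rule prod.remove)

(* Amplitude of sigma_mu|psi>_A (x) sqrt 2 (sigma_mu (x) 1)|phi>_{S_j N_j}
   at the bits (N_j, S_j, A) *)
definition branch_amp :: "nat \<Rightarrow> (bool \<Rightarrow> complex) \<Rightarrow> bool \<times> bool \<times> bool \<Rightarrow> complex" where
  "branch_amp mu psi = (\<lambda>(t, s, a). pauli_apply mu psi a * pauli mu s t)"

lemma branch_amp_orthogonal:
  assumes "mu < 4" "nu < 4" "pure_qubit psi"
  shows "(\<Sum>z\<in>UNIV. branch_amp mu psi z * cnj (branch_amp nu psi z)) = (if mu = nu then 2 else 0)"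
proof -
  have "(\<Sum>z\<in>UNIV. branch_amp mu psi z * cnj (branch_amp nu psi z))
      = (\<Sum>a\<in>UNIV. pauli_apply mu psi a * cnj (pauli_apply nu psi a)) *
        (\<Sum>s\<in>UNIV. \<Sum>t\<in>UNIV. pauli mu s t * cnj (pauli nu s t))"
    by (simp add: branch_amp_def UNIV_Times_UNIV[symmetric] sum.cartesian_product[symmetric]
        UNIV_bool algebra_simps del: UNIV_Times_UNIV)
  then show ?thesis
    using pauli_orthogonal[OF assms(1,2)] pauli_apply_norm[OF assms(1,3)] by auto
qed

lemma enc_state_glue_pair:
  assumes "B \<subseteq> storage n" "j \<in> {1..n}" "QS j \<notin> B" "QN j \<notin> B"
  shows "enc_state n psi (glue B x (w(QN j := t, QS j := s, QA := a)))
       = (\<Sum>mu<4. (1/2 * inverse (alpha n mu) * complex_of_real (1 / sqrt 2) *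
                   bell_amp ({1..n} - {j}) mu (glue B x w)) *
                  branch_amp mu psi (t, s, a))"
proof -
  define f where "f = glue B x (w(QN j := t, QS j := s, QA := a))"
  have "QA \<notin> B" using assms(1) by (auto simp: storage_def)
  then have f: "f QA = a" "f (QS j) = s" "f (QN j) = t"
    using assms(3,4) by (simp_all add: f_def glue_def)
  have "bell_amp ({1..n} - {j}) mu f = bell_amp ({1..n} - {j}) mu (glue B x w)" for mu
    unfolding bell_amp_def by (rule prod.cong) (auto simp: f_def glue_def)
  then have "bell_amp {1..n} mu f
      = pauli mu s t * complex_of_real (1 / sqrt 2) * bell_amp ({1..n} - {j}) mu (glue B x w)" for mu
    using bell_amp_remove[OF _ assms(2), of mu f] by (simp add: f)
  then show ?thesis
    unfolding f_def[symmetric] enc_state_eq f(1)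
    by (simp add: branch_amp_def sum_distrib_left ac_simps)
qed

lemma reduced_state_eq:
  assumes B: "B \<subseteq> storage n" and j: "j \<in> {1..n}" "QS j \<notin> B" "QN j \<notin> B"
    and psi: "pure_qubit psi"
  shows "reduced_state n B psi x y =
    (\<Sum>w\<in>configs (qubits n - B - {QA} - {QS j} - {QN j}).
       1/4 * (\<Sum>mu<4. bell_amp ({1..n} - {j}) mu (glue B x w) *
                      cnj (bell_amp ({1..n} - {j}) mu (glue B y w))))"
    (is "_ = ?rhs")
proof -
  let ?X = "qubits n - B"
  define F where "F z = enc_state n psi (glue B x z) * cnj (enc_state n psi (glue B y z))" for z
  define u where "u z w mu = 1/2 * inverse (alpha n mu) * complex_of_real (1 / sqrt 2) *
                   bell_amp ({1..n} - {j}) mu (glue B z w)" for z w mu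
  have "QA \<notin> B" using B by (auto simp: storage_def)
  then have "QA \<in> ?X" "QS j \<in> ?X - {QA}" "QN j \<in> ?X - {QA} - {QS j}"
    using j by (simp_all add: qubits_def)
  note configs_split = sum_configs_remove[OF this(1)] sum_configs_remove[OF this(2)]
    sum_configs_remove[OF this(3)]
  have "reduced_state n B psi x y
      = (\<Sum>w\<in>configs (?X - {QA} - {QS j} - {QN j}). \<Sum>(t, s, a)\<in>UNIV.
           F (w(QN j := t, QS j := s, QA := a)))"
    unfolding reduced_state_def F_def[symmetric] configs_split by (simp add: sum.cartesian_product)
  also have "\<dots> = (\<Sum>w\<in>configs (?X - {QA} - {QS j} - {QN j}). \<Sum>z\<in>UNIV.
           (\<Sum>mu<4. u x w mu * branch_amp mu psi z) * cnj (\<Sum>mu<4. u y w mu * branch_amp mu psi z))"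
    unfolding F_def enc_state_glue_pair[OF B j] u_def by (simp add: split_def)
  also have "\<dots> = (\<Sum>w\<in>configs (?X - {QA} - {QS j} - {QN j}).
           2 * (\<Sum>mu<4. u x w mu * cnj (u y w mu)))"
    by (intro sum.cong refl sum_expand_orthogonal)
       (simp_all add: branch_amp_orthogonal[OF _ _ psi])
  also have "\<dots> = ?rhs"
  proof -
    have r: "complex_of_real (1 / sqrt 2) * cnj (complex_of_real (1 / sqrt 2)) = 1/2"
      by (simp flip: of_real_mult)
    have uu: "u x w mu * cnj (u y w mu) = 1/8 *
        (bell_amp ({1..n} - {j}) mu (glue B x w) * cnj (bell_amp ({1..n} - {j}) mu (glue B y w)))"
      for w mu
      using inverse_alpha_mult_cnj[of n mu] r unfolding u_def
      by (simp add: field_simps)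
    show ?thesis by (simp only: uu sum_distrib_left) simp
  qed
  finally show ?thesis .
qed

theorem proposition1:
  fixes n j :: nat and B :: "qlabel set"
  assumes "n \<ge> 1"
    and "B \<subseteq> storage n"
    and "j \<in> {1..n}"
    and "QS j \<notin> B" and "QN j \<notin> B"
  shows "completely_noninformative n B"
  unfolding completely_noninformative_def
  using reduced_state_eq[OF assms(2-5)] by simp

end
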